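(* Let $t$ be a normal $\lambda$-term and $v$ a closed $\lambda$-term, let $\alpha$ be a variable, $x_1,\dots,x_r$ variables, and for each $i$ let $y_{i1},\dots,y_{in_i}$ be variables distinct from $\alpha$. If $t[\lambda y_{11}\dots\lambda y_{1n_1}\alpha/x_1,\dots,\lambda y_{r1}\dots\lambda y_{rn_r}\alpha/x_r]\rightarrow_\beta v$ (simultaneous substitution), then $x_i\notin Fv(t)$ for all $1\le i\le r$.
   Context: $\lambda$-terms are those of the untyped $\lambda$-calculus; $Fv(t)$ is the set of free variables of $t$; a term is closed if it has no free variable; substitution is capture-avoiding; $\rightarrow_\beta$ denotes $\beta$-reduction in zero or more steps; a term is normal if it contains no $\beta$-redex. *)

theory Defs
  imports Main
begin

text \<open>Untyped lambda-terms in the locally nameless representation: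
  free variables are names (natural numbers), bound variables are de Bruijn
  indices. The lambda-terms are exactly the locally closed raw terms (lc).
  Alpha-equivalent terms are identical, and substitution of free variables
  is automatically capture-avoiding.\<close>

type_synonym var = nat

datatype trm = FVar var | BVar nat | App trm trm | Abs trm

fun fv :: "trm \<Rightarrow> var set" where
  "fv (FVar x) = {x}"
| "fv (BVar i) = {}"
| "fv (App s t) = fv s \<union> fv t"
| "fv (Abs t) = fv t"

fun opn :: "nat \<Rightarrow> trm \<Rightarrow> trm \<Rightarrow> trm" where
  "opn k u (FVar x) = FVar x"
| "opn k u (BVar i) = (if i = k then u else BVar i)"
| "opn k u (App s t) = App (opn k u s) (opn k u t)"
| "opn k u (Abs t) = Abs (opn (Suc k) u t)"

fun cls :: "nat \<Rightarrow> var \<Rightarrow> trm \<Rightarrow> trm" where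
  "cls k x (FVar y) = (if y = x then BVar k else FVar y)"
| "cls k x (BVar i) = BVar i"
| "cls k x (App s t) = App (cls k x s) (cls k x t)"
| "cls k x (Abs t) = Abs (cls (Suc k) x t)"

inductive lc :: "trm \<Rightarrow> bool" where
  lc_var: "lc (FVar x)"
| lc_app: "lc s \<Longrightarrow> lc t \<Longrightarrow> lc (App s t)"
| lc_abs: "finite L \<Longrightarrow> (\<And>x. x \<notin> L \<Longrightarrow> lc (opn 0 (FVar x) t)) \<Longrightarrow> lc (Abs t)"

definition lam :: "var \<Rightarrow> trm \<Rightarrow> trm" where
  "lam x t = Abs (cls 0 x t)"

definition lams :: "var list \<Rightarrow> var \<Rightarrow> trm" where
  "lams ys a = foldr lam ys (FVar a)"

fun msubst :: "(var \<Rightarrow> trm option) \<Rightarrow> trm \<Rightarrow> trm" where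
  "msubst \<sigma> (FVar x) = (case \<sigma> x of Some u \<Rightarrow> u | None \<Rightarrow> FVar x)"
| "msubst \<sigma> (BVar i) = BVar i"
| "msubst \<sigma> (App s t) = App (msubst \<sigma> s) (msubst \<sigma> t)"
| "msubst \<sigma> (Abs t) = Abs (msubst \<sigma> t)"

inductive beta1 :: "trm \<Rightarrow> trm \<Rightarrow> bool" where
  beta_redex: "lc (Abs s) \<Longrightarrow> lc u \<Longrightarrow> beta1 (App (Abs s) u) (opn 0 u s)"
| beta_app1: "beta1 s s' \<Longrightarrow> lc u \<Longrightarrow> beta1 (App s u) (App s' u)"
| beta_app2: "lc s \<Longrightarrow> beta1 u u' \<Longrightarrow> beta1 (App s u) (App s u')"
| beta_abs: "finite L \<Longrightarrow> (\<And>x. x \<notin> L \<Longrightarrow> beta1 (opn 0 (FVar x) s) (opn 0 (FVar x) s'))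
             \<Longrightarrow> beta1 (Abs s) (Abs s')"

abbreviation beta :: "trm \<Rightarrow> trm \<Rightarrow> bool" where
  "beta \<equiv> beta1\<^sup>*\<^sup>*"

fun has_redex :: "trm \<Rightarrow> bool" where
  "has_redex (FVar x) = False"
| "has_redex (BVar i) = False"
| "has_redex (App s t) = ((\<exists>u. s = Abs u) \<or> has_redex s \<or> has_redex t)"
| "has_redex (Abs t) = has_redex t"

definition normal :: "trm \<Rightarrow> bool" where
  "normal t \<longleftrightarrow> \<not> has_redex t"

definition closed :: "trm \<Rightarrow> bool" where
  "closed t \<longleftrightarrow> fv t = {}"

end

theory Submission
  imports Defs
begin

text \<open>Substituting \<open>\<lambda>y\<^sub>1\<dots>\<lambda>y\<^sub>n. \<alpha>\<close> for variables of a normal term creates only redexes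
  whose operator is such an ``abstraction chain'' over \<open>\<alpha>\<close>; contracting one discards the
  argument and leaves a shorter chain, so this shape of redexes is preserved by reduction.
  Under that invariant, an occurrence of a variable in a persistent position -- reachable
  through abstractions, operators of applications, and arguments of neutral applications --
  can never be erased. If some \<open>x\<^sub>i\<close> occurred in \<open>t\<close>, the substituted \<open>\<alpha>\<close> would occur
  persistently, hence free in every reduct, contradicting closedness of \<open>v\<close>.\<close>

fun is_abs :: "trm \<Rightarrow> bool" where
  "is_abs (Abs _) = True"
| "is_abs _ = False"

inductive abs_chain :: "var \<Rightarrow> trm \<Rightarrow> bool" for \<alpha> where
  abs_chain_FVar: "abs_chain \<alpha> (FVar \<alpha>)"
| abs_chain_Abs: "abs_chain \<alpha> s \<Longrightarrow> abs_chain \<alpha> (Abs s)"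

inductive chain_redexes :: "var \<Rightarrow> trm \<Rightarrow> bool" for \<alpha> where
  chain_redexes_FVar: "chain_redexes \<alpha> (FVar a)"
| chain_redexes_BVar: "chain_redexes \<alpha> (BVar i)"
| chain_redexes_Abs: "chain_redexes \<alpha> s \<Longrightarrow> chain_redexes \<alpha> (Abs s)"
| chain_redexes_App:
    "chain_redexes \<alpha> s \<Longrightarrow> chain_redexes \<alpha> u \<Longrightarrow> \<not> is_abs s \<Longrightarrow> chain_redexes \<alpha> (App s u)"
| chain_redexes_redex:
    "abs_chain \<alpha> (Abs s) \<Longrightarrow> chain_redexes \<alpha> u \<Longrightarrow> chain_redexes \<alpha> (App (Abs s) u)"

inductive neutral :: "trm \<Rightarrow> bool" where
  neutral_BVar: "neutral (BVar i)"
| neutral_FVar: "neutral (FVar a)"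
| neutral_App: "neutral s \<Longrightarrow> neutral (App s u)"

inductive persistent :: "var \<Rightarrow> trm \<Rightarrow> bool" for a where
  persistent_FVar: "persistent a (FVar a)"
| persistent_Abs: "persistent a s \<Longrightarrow> persistent a (Abs s)"
| persistent_App_fun: "persistent a s \<Longrightarrow> persistent a (App s u)"
| persistent_App_arg: "neutral s \<Longrightarrow> persistent a u \<Longrightarrow> persistent a (App s u)"

inductive_simps abs_chain_FVar_iff[simp]: "abs_chain \<alpha> (FVar y)"
inductive_simps abs_chain_Abs_iff[simp]: "abs_chain \<alpha> (Abs s)"
inductive_simps abs_chain_App_iff[simp]: "abs_chain \<alpha> (App s u)"
inductive_simps chain_redexes_Abs_iff[simp]: "chain_redexes \<alpha> (Abs s)"
inductive_simps chain_redexes_App_iff: "chain_redexes \<alpha> (App s u)"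
inductive_simps neutral_FVar_iff[simp]: "neutral (FVar y)"
inductive_simps neutral_BVar_iff[simp]: "neutral (BVar i)"
inductive_simps neutral_Abs_iff[simp]: "neutral (Abs s)"
inductive_simps neutral_App_iff[simp]: "neutral (App s u)"
inductive_simps persistent_FVar_iff[simp]: "persistent a (FVar y)"
inductive_simps persistent_BVar_iff[simp]: "persistent a (BVar i)"
inductive_simps persistent_Abs_iff[simp]: "persistent a (Abs s)"
inductive_simps persistent_App_iff: "persistent a (App s u)"

lemma is_abs_iff: "is_abs s \<longleftrightarrow> (\<exists>r. s = Abs r)"
  by (cases s) auto

lemma fresh_var_exists: "finite (L :: var set) \<Longrightarrow> \<exists>x. x \<notin> L"
  using ex_new_if_finite infinite_UNIV_nat by blast

lemma opn_abs_chain: "abs_chain \<alpha> w \<Longrightarrow> opn k u w = w"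
  by (induction arbitrary: k rule: abs_chain.induct) auto

lemma fv_abs_chain: "abs_chain \<alpha> w \<Longrightarrow> fv w = {\<alpha>}"
  by (induction rule: abs_chain.induct) auto

lemma abs_chain_opn_FVar_iff:
  "x \<noteq> \<alpha> \<Longrightarrow> abs_chain \<alpha> (opn k (FVar x) w) \<longleftrightarrow> abs_chain \<alpha> w"
proof
  show "abs_chain \<alpha> (opn k (FVar x) w) \<Longrightarrow> x \<noteq> \<alpha> \<Longrightarrow> abs_chain \<alpha> w"
    by (induction w arbitrary: k) (auto split: if_splits)
qed (simp add: opn_abs_chain)

lemma cls_fresh: "y \<notin> fv w \<Longrightarrow> cls k y w = w"
  by (induction w arbitrary: k) auto

lemma abs_chain_lams: "\<alpha> \<notin> set ys \<Longrightarrow> abs_chain \<alpha> (lams ys \<alpha>)"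
proof (induction ys)
  case Nil
  then show ?case by (simp add: lams_def)
next
  case (Cons y ys)
  then have chain: "abs_chain \<alpha> (lams ys \<alpha>)" by simp
  with Cons.prems have "y \<notin> fv (lams ys \<alpha>)" by (simp add: fv_abs_chain)
  with chain show ?case by (simp add: lams_def lam_def cls_fresh)
qed

lemma abs_chain_not_beta1: "beta1 w w' \<Longrightarrow> \<not> abs_chain \<alpha> w"
proof (induction rule: beta1.induct)
  case (beta_abs L s s')
  obtain x where "x \<notin> L" using beta_abs(1) fresh_var_exists by blast
  with beta_abs(3) show ?case by (auto simp: opn_abs_chain)
qed auto

lemma abs_chain_chain_redexes: "abs_chain \<alpha> w \<Longrightarrow> chain_redexes \<alpha> w"
  by (induction rule: abs_chain.induct) (auto intro: chain_redexes.intros)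

lemma chain_redexes_opn_FVar_iff:
  "x \<noteq> \<alpha> \<Longrightarrow> chain_redexes \<alpha> (opn k (FVar x) w) \<longleftrightarrow> chain_redexes \<alpha> w"
proof (induction w arbitrary: k)
  case (App s u)
  show ?case
  proof (cases s)
    case (Abs r)
    with App show ?thesis
      by (simp add: chain_redexes_App_iff abs_chain_opn_FVar_iff[OF App.prems, of "Suc k"])
  qed (use App in \<open>auto simp: chain_redexes_App_iff\<close>)
qed (auto intro: chain_redexes.intros)

text \<open>The second conjunct handles an operator that reduces to an abstraction, creating a
  new redex: it is then an abstraction chain.\<close>

lemma chain_redexes_beta1:
  "beta1 w w' \<Longrightarrow> chain_redexes \<alpha> w \<Longrightarrow>
    chain_redexes \<alpha> w' \<and> (\<not> is_abs w \<longrightarrow> is_abs w' \<longrightarrow> abs_chain \<alpha> w')"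
proof (induction rule: beta1.induct)
  case (beta_redex s u)
  then have "abs_chain \<alpha> s" by (auto simp: chain_redexes_App_iff)
  then show ?case by (simp add: opn_abs_chain abs_chain_chain_redexes)
next
  case (beta_app1 s s' u)
  from beta_app1.prems show ?case
  proof (cases rule: chain_redexes.cases)
    case chain_redexes_App
    with beta_app1.IH show ?thesis
      by (cases "is_abs s'") (auto simp: is_abs_iff intro: chain_redexes.intros)
  next
    case chain_redexes_redex
    with beta_app1.hyps abs_chain_not_beta1 show ?thesis by blast
  qed
next
  case (beta_app2 s u u')
  from beta_app2.prems show ?case
    by (cases rule: chain_redexes.cases) (use beta_app2.IH in \<open>auto intro: chain_redexes.intros\<close>)
next
  case (beta_abs L s s')
  obtain x where "x \<notin> L" "x \<noteq> \<alpha>"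
    using beta_abs(1) fresh_var_exists[of "L \<union> {\<alpha>}"] by blast
  with beta_abs(3)[of x] beta_abs.prems show ?case by (simp add: chain_redexes_opn_FVar_iff)
qed

lemma chain_redexes_beta: "beta w w' \<Longrightarrow> chain_redexes \<alpha> w \<Longrightarrow> chain_redexes \<alpha> w'"
  by (induction rule: rtranclp_induct) (auto dest: chain_redexes_beta1)

lemma neutral_beta1: "beta1 s s' \<Longrightarrow> neutral s \<Longrightarrow> neutral s'"
  by (induction rule: beta1.induct) auto

lemma neutral_opn_FVar_iff: "neutral (opn k (FVar x) s) \<longleftrightarrow> neutral s"
  by (induction s) auto

lemma persistent_fv: "persistent a w \<Longrightarrow> a \<in> fv w"
  by (induction rule: persistent.induct) auto

lemma persistent_abs_chain: "abs_chain \<alpha> w \<Longrightarrow> persistent \<alpha> w"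
  by (induction rule: abs_chain.induct) (auto intro: persistent.intros)

lemma persistent_opn_FVar_iff:
  "x \<noteq> a \<Longrightarrow> persistent a (opn k (FVar x) w) \<longleftrightarrow> persistent a w"
  by (induction w arbitrary: k) (auto simp: persistent_App_iff neutral_opn_FVar_iff)

lemma persistent_beta1:
  "beta1 w w' \<Longrightarrow> chain_redexes \<alpha> w \<Longrightarrow> persistent a w \<Longrightarrow> persistent a w'"
proof (induction rule: beta1.induct)
  case (beta_redex s u)
  then have "abs_chain \<alpha> s" and "persistent a s"
    by (auto simp: chain_redexes_App_iff persistent_App_iff)
  then show ?case by (simp add: opn_abs_chain)
next
  case (beta_app1 s s' u)
  from beta_app1.prems(2) show ?case
  proof (cases rule: persistent.cases)
    case persistent_App_fun
    from beta_app1.prems(1) show ?thesis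
    proof (cases rule: chain_redexes.cases)
      case chain_redexes_App
      with persistent_App_fun beta_app1.IH show ?thesis by (auto intro: persistent.intros)
    next
      case chain_redexes_redex
      with beta_app1.hyps abs_chain_not_beta1 show ?thesis by blast
    qed
  next
    case persistent_App_arg
    with beta_app1.hyps neutral_beta1 show ?thesis by (auto intro: persistent.intros)
  qed
next
  case (beta_app2 s u u')
  then show ?case by (auto simp: chain_redexes_App_iff persistent_App_iff)
next
  case (beta_abs L s s')
  obtain x where "x \<notin> L" "x \<noteq> a" "x \<noteq> \<alpha>"
    using beta_abs(1) fresh_var_exists[of "L \<union> {a, \<alpha>}"] by blast
  with beta_abs(3)[of x] beta_abs.prems show ?case
    by (simp add: chain_redexes_opn_FVar_iff persistent_opn_FVar_iff)
qed

lemma persistent_beta: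
  "beta w w' \<Longrightarrow> chain_redexes \<alpha> w \<Longrightarrow> persistent a w \<Longrightarrow> persistent a w'"
proof (induction rule: rtranclp_induct)
  case (step w' w'')
  then show ?case using chain_redexes_beta persistent_beta1 by blast
qed

context
  fixes \<sigma> :: "var \<Rightarrow> trm option" and \<alpha> :: var
  assumes abs_chain_range: "\<And>y u. \<sigma> y = Some u \<Longrightarrow> abs_chain \<alpha> u"
begin

lemma chain_redexes_msubst: "\<not> has_redex t \<Longrightarrow> chain_redexes \<alpha> (msubst \<sigma> t)"
proof (induction t)
  case (FVar y)
  then show ?case
    by (cases "\<sigma> y") (auto intro: chain_redexes.intros abs_chain_chain_redexes abs_chain_range)
next
  case (App s u)
  then have IH: "chain_redexes \<alpha> (msubst \<sigma> s)" "chain_redexes \<alpha> (msubst \<sigma> u)"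
    and "\<not> is_abs s"
    by (auto simp: is_abs_iff)
  show ?case
  proof (cases "is_abs (msubst \<sigma> s)")
    case True
    with \<open>\<not> is_abs s\<close> obtain y u where "s = FVar y" "\<sigma> y = Some u"
      by (cases s) (auto split: option.splits)
    with True IH show ?thesis
      by (auto simp: is_abs_iff dest!: abs_chain_range intro: chain_redexes_redex)
  qed (use IH in \<open>auto intro: chain_redexes_App\<close>)
qed (auto intro: chain_redexes.intros)

lemma neutral_msubst:
  "\<not> has_redex s \<Longrightarrow> \<not> is_abs s \<Longrightarrow> (\<forall>y\<in>fv s. \<sigma> y = None) \<Longrightarrow> neutral (msubst \<sigma> s)"
  by (induction s) (auto simp: is_abs_iff)

lemma persistent_msubst:
  "\<not> has_redex t \<Longrightarrow> x \<in> fv t \<Longrightarrow> \<sigma> x \<noteq> None \<Longrightarrow> persistent \<alpha> (msubst \<sigma> t)"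
proof (induction t arbitrary: x)
  case (FVar y)
  then show ?case by (auto split: option.splits intro: persistent_abs_chain abs_chain_range)
next
  case (App s u)
  then have "\<not> is_abs s" by (auto simp: is_abs_iff)
  show ?case
  proof (cases "x \<in> fv s \<or> (\<exists>y\<in>fv s. \<sigma> y \<noteq> None)")
    case True
    with App show ?thesis by (auto intro: persistent_App_fun)
  next
    case False
    with App \<open>\<not> is_abs s\<close> show ?thesis by (auto intro: persistent_App_arg neutral_msubst)
  qed
qed auto

end

theorem lemma2p1p4:
  fixes t v :: trm and \<alpha> :: var and xs :: "var list" and yss :: "var list list"
  assumes "lc t" and "normal t"
    and "lc v" and "closed v"
    and "distinct xs" and "length yss = length xs"
    and "\<forall>ys \<in> set yss. \<alpha> \<notin> set ys"
    and "beta (msubst (map_of (zip xs (map (\<lambda>ys. lams ys \<alpha>) yss))) t) v"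
  shows "\<forall>x \<in> set xs. x \<notin> fv t"
proof (intro ballI notI)
  fix x assume "x \<in> set xs" and "x \<in> fv t"
  define \<sigma> where "\<sigma> = map_of (zip xs (map (\<lambda>ys. lams ys \<alpha>) yss))"
  have chains: "abs_chain \<alpha> u" if "\<sigma> y = Some u" for y u
  proof -
    from that have "u \<in> (\<lambda>ys. lams ys \<alpha>) ` set yss"
      unfolding \<sigma>_def by (metis map_of_SomeD set_map set_zip_rightD)
    with assms(7) show ?thesis by (auto intro: abs_chain_lams)
  qed
  have "\<sigma> x \<noteq> None"
    unfolding \<sigma>_def using \<open>x \<in> set xs\<close> assms(6) by (simp add: map_of_zip_is_None)
  with chains \<open>x \<in> fv t\<close> assms(2) have "chain_redexes \<alpha> (msubst \<sigma> t)"
    and "persistent \<alpha> (msubst \<sigma> t)"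
    by (auto simp: normal_def intro: chain_redexes_msubst persistent_msubst)
  with assms(8) have "persistent \<alpha> v" unfolding \<sigma>_def by (blast intro: persistent_beta)
  with assms(4) show False by (auto simp: closed_def dest: persistent_fv)
qed

end
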